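(* Let $p$ be a prime, $e\ge 1$, and $G$ a finite abelian group of order $p^e$. Let $\rho,\tau\colon G\to\mathbf{C}^*$ be representations. If $\rho$ and $\tau$ are not equivalent, then $b_\rho b_\tau=0$ in $\mathbf{Z}[G]$. Furthermore, if $\rho$ has level $k>0$, then $b_\rho^2=p^{e-k}(1-y_\rho)b_\rho$.
   Context: A representation is a group homomorphism $\rho\colon G\to\mathbf{C}^*$. It has level $k$ if $\rho(G)$ has $p^k$ elements. Two representations are equivalent if they have the same kernel. Write $\omega=\exp(2\pi i/p)$. For $\rho$ of level $k>0$ set $b_\rho=\sum_{x\in G,\ \rho(x)=1}x-\sum_{\xi\in G,\ \rho(\xi)=\omega}\xi\in\mathbf{Z}[G]$, and let $y_\rho\in G$ be a fixed element with $\rho(y_\rho)=\omega$, so that $b_\rho=\bigl(\sum_{\rho(x)=1}x\bigr)(1-y_\rho)$. For the trivial representation $1$ (the only one of level $0$) set $b_1=\sum_{x\in G}x$. *)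

theory Defs
  imports "HOL-Algebra.Algebra" Complex_Main
begin

text \<open>Elements of the integral group ring Z[G] of a finite group G are represented
  as functions G -> int (coefficient functions), zero outside the carrier.\<close>

definition gr_mult :: "('a,'b) monoid_scheme \<Rightarrow> ('a \<Rightarrow> int) \<Rightarrow> ('a \<Rightarrow> int) \<Rightarrow> ('a \<Rightarrow> int)" where
  "gr_mult G f g = (\<lambda>z. if z \<in> carrier G
      then (\<Sum>x\<in>carrier G. f x * g (inv\<^bsub>G\<^esub> x \<otimes>\<^bsub>G\<^esub> z)) else 0)"

definition gr_zero :: "'a \<Rightarrow> int" where
  "gr_zero = (\<lambda>z. 0)"

definition gr_of :: "('a,'b) monoid_scheme \<Rightarrow> 'a \<Rightarrow> ('a \<Rightarrow> int)" where
  "gr_of G x = (\<lambda>z. if z = x then 1 else 0)"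

definition gr_one :: "('a,'b) monoid_scheme \<Rightarrow> ('a \<Rightarrow> int)" where
  "gr_one G = gr_of G \<one>\<^bsub>G\<^esub>"

definition gr_sub :: "('a \<Rightarrow> int) \<Rightarrow> ('a \<Rightarrow> int) \<Rightarrow> ('a \<Rightarrow> int)" where
  "gr_sub f g = (\<lambda>z. f z - g z)"

definition gr_smult :: "int \<Rightarrow> ('a \<Rightarrow> int) \<Rightarrow> ('a \<Rightarrow> int)" where
  "gr_smult c f = (\<lambda>z. c * f z)"

definition is_rep :: "('a,'b) monoid_scheme \<Rightarrow> ('a \<Rightarrow> complex) \<Rightarrow> bool" where
  "is_rep G \<rho> \<longleftrightarrow> (\<forall>x\<in>carrier G. \<rho> x \<noteq> 0) \<and>
     (\<forall>x\<in>carrier G. \<forall>y\<in>carrier G. \<rho> (x \<otimes>\<^bsub>G\<^esub> y) = \<rho> x * \<rho> y)"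

definition has_level :: "('a,'b) monoid_scheme \<Rightarrow> nat \<Rightarrow> ('a \<Rightarrow> complex) \<Rightarrow> nat \<Rightarrow> bool" where
  "has_level G p \<rho> k \<longleftrightarrow> card (\<rho> ` carrier G) = p ^ k"

definition rep_kernel :: "('a,'b) monoid_scheme \<Rightarrow> ('a \<Rightarrow> complex) \<Rightarrow> 'a set" where
  "rep_kernel G \<rho> = {x \<in> carrier G. \<rho> x = 1}"

definition rep_equiv :: "('a,'b) monoid_scheme \<Rightarrow> ('a \<Rightarrow> complex) \<Rightarrow> ('a \<Rightarrow> complex) \<Rightarrow> bool" where
  "rep_equiv G \<rho> \<tau> \<longleftrightarrow> rep_kernel G \<rho> = rep_kernel G \<tau>"

definition omega :: "nat \<Rightarrow> complex" where
  "omega p = exp (2 * pi * \<i> / of_nat p)"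

definition b_elt :: "('a,'b) monoid_scheme \<Rightarrow> nat \<Rightarrow> ('a \<Rightarrow> complex) \<Rightarrow> ('a \<Rightarrow> int)" where
  "b_elt G p \<rho> = (if has_level G p \<rho> 0
     then (\<lambda>z. if z \<in> carrier G then 1 else 0)
     else (\<lambda>z. if z \<in> carrier G \<and> \<rho> z = 1 then 1
               else if z \<in> carrier G \<and> \<rho> z = omega p then -1 else 0))"

end

theory Submission
  imports Defs
begin

text \<open>Read coefficientwise, \<open>b\<^sub>\<rho> = h - h(y\<^sup>-\<^sup>1 \<cdot>)\<close> with \<open>h\<close> the indicator of \<open>ker \<rho>\<close>,
  i.e. \<open>b\<^sub>\<rho> = (\<Sum>\<^bsub>ker \<rho>\<^esub> x)(1 - y)\<close>, and this holds for every \<open>y\<close> with \<open>\<rho> y = \<omega>\<close>.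
  If \<open>\<rho>\<close> and \<open>\<tau>\<close> have different kernels, some \<open>u\<close> lies in one kernel but not the other;
  since \<open>\<tau> u\<close> is a nontrivial \<open>p\<^sup>e\<close>-th root of unity, a power \<open>w\<close> of \<open>u\<close> has \<open>\<tau> w = \<omega>\<close> and
  \<open>\<rho> w = 1\<close>. Then \<open>b\<^sub>\<rho> w = b\<^sub>\<rho>\<close> while \<open>b\<^sub>\<tau> = (1 - w) h\<close>, so \<open>b\<^sub>\<rho> b\<^sub>\<tau> = 0\<close>.
  For the square, \<open>b\<^sub>\<rho>(x\<^sup>-\<^sup>1 z)\<close> depends only on \<open>\<rho> x\<close>, so the sum defining \<open>b\<^sub>\<rho>\<^sup>2\<close>
  collapses on the two cosets \<open>ker \<rho>\<close> and \<open>y ker \<rho>\<close>, each of size \<open>p\<^sup>e\<^sup>-\<^sup>k\<close>.\<close>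

lemma omega_eq_cis: "omega p = cis (2 * pi / real p)"
  by (simp add: omega_def cis_conv_exp mult_ac)

lemma omega_neq_0: "omega p \<noteq> 0"
  by (simp add: omega_def)

lemma omega_neq_1:
  assumes "p > 1" shows "omega p \<noteq> 1"
proof -
  have "inj_on (\<lambda>k. cis (2 * pi * real k / real p)) {..<p}"
    using bij_betw_roots_unity[of p] assms by (auto simp: bij_betw_def)
  hence "cis (2 * pi * real 1 / real p) \<noteq> cis (2 * pi * real 0 / real p)"
    by (rule inj_on_contraD) (use assms in auto)
  thus ?thesis by (simp add: omega_eq_cis)
qed

lemma prime_root_of_unity_power_eq_omega:
  fixes \<eta> :: complex
  assumes "Factorial_Ring.prime p" "\<eta> ^ p = 1" "\<eta> \<noteq> 1"
  shows "\<exists>j. \<eta> ^ j = omega p"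
proof -
  have p0: "p > 0" using assms(1) prime_gt_0_nat by blast
  have "\<eta> \<in> (\<lambda>k. cis (2 * pi * real k / real p)) ` {..<p}"
    using bij_betw_roots_unity[OF p0] assms(2) by (auto simp: bij_betw_def)
  then obtain k where k: "k < p" and \<eta>: "\<eta> = omega p ^ k"
    by (auto simp: omega_eq_cis DeMoivre mult_ac)
  have "k \<noteq> 0" using \<eta> assms(3) by (metis power_0)
  hence "coprime p k" using prime_imp_coprime[OF assms(1)] k dvd_imp_le[of p k] by auto
  then obtain x y where xy: "k * x = p * y + 1"
    using bezout_nat[OF \<open>k \<noteq> 0\<close>, of p] by (auto simp: coprime_iff_gcd_eq_1 gcd.commute)
  have "omega p ^ p = 1" using p0 by (simp add: omega_eq_cis DeMoivre)
  hence "\<eta> ^ x = omega p" by (simp add: \<eta> xy power_mult[symmetric] power_add power_mult)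
  thus ?thesis by blast
qed

lemma prime_power_root_of_unity_power_eq_omega:
  fixes \<zeta> :: complex
  assumes "Factorial_Ring.prime p" "\<zeta> ^ (p ^ e) = 1" "\<zeta> \<noteq> 1"
  shows "\<exists>N. \<zeta> ^ N = omega p"
  using assms(2)
proof (induction e)
  case 0
  thus ?case using assms(3) by simp
next
  case (Suc e)
  show ?case
  proof (cases "\<zeta> ^ (p ^ e) = 1")
    case True
    thus ?thesis by (rule Suc.IH)
  next
    case False
    have "(\<zeta> ^ (p ^ e)) ^ p = 1" using Suc.prems by (simp add: power_mult[symmetric] mult.commute)
    then obtain j where "(\<zeta> ^ (p ^ e)) ^ j = omega p"
      using prime_root_of_unity_power_eq_omega[OF assms(1)] False by blast
    thus ?thesis by (metis power_mult)
  qed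
qed

lemma rep_mult: "is_rep G \<rho> \<Longrightarrow> x \<in> carrier G \<Longrightarrow> y \<in> carrier G \<Longrightarrow> \<rho> (x \<otimes>\<^bsub>G\<^esub> y) = \<rho> x * \<rho> y"
  by (simp add: is_rep_def)

lemma rep_nonzero: "is_rep G \<rho> \<Longrightarrow> x \<in> carrier G \<Longrightarrow> \<rho> x \<noteq> 0"
  by (simp add: is_rep_def)

context group
begin

lemma rep_one:
  assumes "is_rep G \<rho>" shows "\<rho> \<one> = 1"
  using rep_mult[OF assms, of \<one> \<one>] rep_nonzero[OF assms, of \<one>] by simp

lemma rep_inv:
  assumes "is_rep G \<rho>" "x \<in> carrier G"
  shows "\<rho> (inv x) = inverse (\<rho> x)"
  using rep_mult[OF assms(1), of x "inv x"] rep_one[OF assms(1)] assms(2)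
  by (simp add: inverse_unique)

lemma rep_inv_mult:
  assumes "is_rep G \<rho>" "x \<in> carrier G" "z \<in> carrier G"
  shows "\<rho> (inv x \<otimes> z) = \<rho> z / \<rho> x"
  using assms by (simp add: rep_mult rep_inv divide_inverse mult.commute)

lemma rep_pow:
  assumes "is_rep G \<rho>" "x \<in> carrier G"
  shows "\<rho> (x [^] (n::nat)) = \<rho> x ^ n"
  by (induction n) (simp_all add: rep_one[OF assms(1)] rep_mult[OF assms(1)] assms(2))

lemma rep_power_eq_omega:
  assumes "finite (carrier G)" "card (carrier G) = p ^ e" "Factorial_Ring.prime p"
    and "is_rep G \<sigma>" "u \<in> carrier G" "\<sigma> u \<noteq> 1"
  shows "\<exists>N. \<sigma> (u [^] (N::nat)) = omega p"
proof -
  have "u [^] (p ^ e) = \<one>" using pow_order_eq_1[OF assms(5)] assms(2) by (simp add: order_def)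
  hence "\<sigma> u ^ (p ^ e) = 1" using rep_pow[OF assms(4,5)] rep_one[OF assms(4)] by metis
  then obtain N where "\<sigma> u ^ N = omega p"
    using prime_power_root_of_unity_power_eq_omega[OF assms(3)] assms(6) by blast
  thus ?thesis using rep_pow[OF assms(4,5)] by metis
qed

lemma rep_level_0_eq_1:
  assumes "is_rep G \<rho>" "has_level G p \<rho> 0" "x \<in> carrier G"
  shows "\<rho> x = 1"
proof -
  have "card (\<rho> ` carrier G) = 1" using assms(2) by (simp add: has_level_def)
  moreover have "\<rho> \<one> \<in> \<rho> ` carrier G" "\<rho> x \<in> \<rho> ` carrier G" using assms(3) by simp_all
  ultimately show ?thesis using rep_one[OF assms(1)] by (metis card_1_singletonE singletonD)
qed

lemma card_rep_fibre:
  assumes "is_rep G \<rho>" "a \<in> carrier G"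
  shows "card {x \<in> carrier G. \<rho> x = \<rho> a} = card (rep_kernel G \<rho>)"
proof -
  have "bij_betw (\<lambda>k. a \<otimes> k) (rep_kernel G \<rho>) {x \<in> carrier G. \<rho> x = \<rho> a}"
    by (rule bij_betw_byWitness[where f' = "\<lambda>x. inv a \<otimes> x"])
       (use assms rep_nonzero[OF assms(1)] in
         \<open>auto simp: rep_kernel_def rep_mult[OF assms(1)] rep_inv_mult[OF assms(1)] rep_inv[OF assms(1)] m_assoc[symmetric]\<close>)
  thus ?thesis by (metis bij_betw_same_card)
qed

lemma card_eq_card_rep_image_mult_card_kernel:
  assumes "is_rep G \<rho>" "finite (carrier G)"
  shows "card (carrier G) = card (\<rho> ` carrier G) * card (rep_kernel G \<rho>)"
proof -
  have "card (carrier G) = (\<Sum>c\<in>\<rho> ` carrier G. card {x \<in> carrier G. \<rho> x = c})"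
    using sum.image_gen[OF assms(2), of "\<lambda>_. 1::nat" \<rho>] by simp
  also have "\<dots> = (\<Sum>c\<in>\<rho> ` carrier G. card (rep_kernel G \<rho>))"
    by (rule sum.cong) (auto simp: card_rep_fibre[OF assms(1)])
  finally show ?thesis by simp
qed

lemma card_rep_kernel:
  assumes "is_rep G \<rho>" "finite (carrier G)" "card (carrier G) = p ^ e"
    "Factorial_Ring.prime p" "has_level G p \<rho> k"
  shows "card (rep_kernel G \<rho>) = p ^ (e - k)"
proof -
  have p1: "p > 1" using assms(4) prime_gt_1_nat by blast
  have eq: "p ^ k * card (rep_kernel G \<rho>) = p ^ e"
    using card_eq_card_rep_image_mult_card_kernel[OF assms(1,2)] assms(3,5) by (simp add: has_level_def)
  hence "p ^ k dvd p ^ e" by (metis dvd_triv_left)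
  hence "k \<le> e" using p1 by (rule power_dvd_imp_le)
  hence "p ^ k * card (rep_kernel G \<rho>) = p ^ k * p ^ (e - k)"
    using eq by (simp add: power_add[symmetric])
  thus ?thesis using p1 by simp
qed

end

lemma b_elt_eq_if_rep_eq:
  "x \<in> carrier G \<Longrightarrow> x' \<in> carrier G \<Longrightarrow> \<rho> x = \<rho> x' \<Longrightarrow> b_elt G p \<rho> x = b_elt G p \<rho> x'"
  by (simp add: b_elt_def)

lemma (in group) b_elt_nontrivial:
  assumes "is_rep G \<rho>" "p > 1" "y \<in> carrier G" "\<rho> y = omega p" "v \<in> carrier G"
  shows "b_elt G p \<rho> v = (if \<rho> v = 1 then 1 else 0) - (if \<rho> v = omega p then 1 else 0)"
proof -
  have "\<not> has_level G p \<rho> 0"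
    using rep_level_0_eq_1[OF assms(1) _ assms(3)] assms(4) omega_neq_1[OF assms(2)] by auto
  thus ?thesis using assms(5) omega_neq_1[OF assms(2)] by (simp add: b_elt_def)
qed

lemma (in group) b_elt_eq_kernel_indicator_diff:
  assumes "is_rep G \<rho>" "p > 1" "y \<in> carrier G" "\<rho> y = omega p" "v \<in> carrier G"
  shows "b_elt G p \<rho> v = (if \<rho> v = 1 then 1 else 0) - (if \<rho> (inv y \<otimes> v) = 1 then 1 else 0)"
proof -
  have "\<rho> (inv y \<otimes> v) = 1 \<longleftrightarrow> \<rho> v = omega p"
    using rep_inv_mult[OF assms(1,3,5)] assms(4) omega_neq_0[of p] by auto
  thus ?thesis using b_elt_nontrivial[OF assms] by simp
qed

lemma gr_mult_apply:
  "z \<in> carrier G \<Longrightarrow> gr_mult G f g z = (\<Sum>x\<in>carrier G. f x * g (inv\<^bsub>G\<^esub> x \<otimes>\<^bsub>G\<^esub> z))"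
  by (simp add: gr_mult_def)

lemma (in comm_group) gr_mult_commute: "gr_mult G f g = gr_mult G g f"
proof
  fix z
  show "gr_mult G f g z = gr_mult G g f z"
  proof (cases "z \<in> carrier G")
    case True
    have "(\<Sum>x\<in>carrier G. f x * g (inv x \<otimes> z)) = (\<Sum>x\<in>carrier G. g x * f (inv x \<otimes> z))"
      by (rule sum.reindex_bij_witness[of _ "\<lambda>x. inv x \<otimes> z" "\<lambda>x. inv x \<otimes> z"])
         (use True in \<open>auto simp: inv_mult m_assoc[symmetric] m_comm[of _ z]\<close>)
    thus ?thesis using True by (simp add: gr_mult_apply)
  qed (simp add: gr_mult_def)
qed

text \<open>In group ring terms: if \<open>f w = f\<close> then \<open>f (1 - w) h = 0\<close>.\<close>

lemma (in group) gr_mult_eq_zero_if_right_invariant: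
  assumes w: "w \<in> carrier G" and f: "\<And>x. x \<in> carrier G \<Longrightarrow> f (x \<otimes> w) = f x"
    and g: "\<And>v. v \<in> carrier G \<Longrightarrow> g v = h v - h (inv w \<otimes> v)"
  shows "gr_mult G f g = gr_zero"
proof
  fix z
  show "gr_mult G f g z = gr_zero z"
  proof (cases "z \<in> carrier G")
    case z: True
    have "(\<Sum>x\<in>carrier G. f x * h (inv w \<otimes> (inv x \<otimes> z))) = (\<Sum>x\<in>carrier G. f x * h (inv x \<otimes> z))"
      by (rule sum.reindex_bij_witness[of _ "\<lambda>x. x \<otimes> inv w" "\<lambda>x. x \<otimes> w"])
         (use w z f in \<open>auto simp: m_assoc inv_mult_group\<close>)
    thus ?thesis using z
      by (simp add: gr_mult_apply g gr_zero_def right_diff_distrib sum_subtractf)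
  qed (simp add: gr_mult_def gr_zero_def)
qed

lemma (in group) gr_mult_one_minus_of:
  assumes "finite (carrier G)" "y \<in> carrier G" "z \<in> carrier G"
  shows "gr_mult G (gr_sub (gr_one G) (gr_of G y)) f z = f z - f (inv y \<otimes> z)"
proof -
  have "gr_mult G (gr_sub (gr_one G) (gr_of G y)) f z
      = (\<Sum>x\<in>carrier G. (if x = \<one> then f (inv x \<otimes> z) else 0) - (if x = y then f (inv x \<otimes> z) else 0))"
    using assms(3) by (auto simp: gr_mult_apply gr_sub_def gr_one_def gr_of_def intro!: sum.cong)
  also have "\<dots> = f z - f (inv y \<otimes> z)"
    using assms by (simp add: sum_subtractf sum.delta)
  finally show ?thesis .
qed

lemma (in group) sum_rep_fibre:
  assumes "finite (carrier G)" "is_rep G \<rho>" "a \<in> carrier G" "z \<in> carrier G"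
    and g: "\<And>v v'. v \<in> carrier G \<Longrightarrow> v' \<in> carrier G \<Longrightarrow> \<rho> v = \<rho> v' \<Longrightarrow> g v = g v'"
  shows "(\<Sum>x\<in>carrier G. if \<rho> x = \<rho> a then g (inv x \<otimes> z) else 0)
       = int (card (rep_kernel G \<rho>)) * g (inv a \<otimes> z)"
proof -
  have "(\<Sum>x\<in>carrier G. if \<rho> x = \<rho> a then g (inv x \<otimes> z) else 0)
      = (\<Sum>x\<in>{x \<in> carrier G. \<rho> x = \<rho> a}. g (inv x \<otimes> z))"
    using assms(1) by (simp add: sum.inter_filter)
  also have "\<dots> = (\<Sum>x\<in>{x \<in> carrier G. \<rho> x = \<rho> a}. g (inv a \<otimes> z))"
    by (rule sum.cong) (use assms(2-4) in \<open>auto intro!: g simp: rep_inv_mult\<close>)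
  finally show ?thesis using card_rep_fibre[OF assms(2,3)] by simp
qed

lemma (in group) b_elt_mult_eq_zero_if_separated:
  assumes "finite (carrier G)" "card (carrier G) = p ^ e" "Factorial_Ring.prime p"
    and \<rho>: "is_rep G \<rho>" and \<tau>: "is_rep G \<tau>"
    and u: "u \<in> carrier G" "\<rho> u = 1" "\<tau> u \<noteq> 1"
  shows "gr_mult G (b_elt G p \<rho>) (b_elt G p \<tau>) = gr_zero"
proof -
  have p1: "p > 1" using assms(3) prime_gt_1_nat by blast
  obtain N where \<tau>w: "\<tau> (u [^] (N::nat)) = omega p"
    using rep_power_eq_omega[OF assms(1-3) \<tau> u(1,3)] by blast
  define w where "w = u [^] N"
  have w: "w \<in> carrier G" "\<rho> w = 1" using u rep_pow[OF \<rho> u(1)] by (simp_all add: w_def)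
  show ?thesis
  proof (rule gr_mult_eq_zero_if_right_invariant[OF w(1)])
    show "b_elt G p \<rho> (x \<otimes> w) = b_elt G p \<rho> x" if "x \<in> carrier G" for x
      using that w by (intro b_elt_eq_if_rep_eq) (simp_all add: rep_mult[OF \<rho>])
    show "b_elt G p \<tau> v = (if \<tau> v = 1 then 1 else 0) - (if \<tau> (inv w \<otimes> v) = 1 then 1 else 0)"
      if "v \<in> carrier G" for v
      by (rule b_elt_eq_kernel_indicator_diff[OF \<tau> p1 w(1) \<tau>w[folded w_def] that])
  qed
qed

lemma (in group) b_elt_square:
  assumes fin: "finite (carrier G)" and "card (carrier G) = p ^ e" and p: "Factorial_Ring.prime p"
    and \<rho>: "is_rep G \<rho>" and "has_level G p \<rho> k"
    and y: "y \<in> carrier G" "\<rho> y = omega p"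
  shows "gr_mult G (b_elt G p \<rho>) (b_elt G p \<rho>)
       = gr_smult (int (p ^ (e - k))) (gr_mult G (gr_sub (gr_one G) (gr_of G y)) (b_elt G p \<rho>))"
proof
  fix z
  define b where "b = b_elt G p \<rho>"
  have p1: "p > 1" using p prime_gt_1_nat by blast
  have b_const: "b v = b v'" if "v \<in> carrier G" "v' \<in> carrier G" "\<rho> v = \<rho> v'" for v v'
    unfolding b_def using that by (rule b_elt_eq_if_rep_eq)
  show "gr_mult G b b z = gr_smult (int (p ^ (e - k))) (gr_mult G (gr_sub (gr_one G) (gr_of G y)) b) z"
  proof (cases "z \<in> carrier G")
    case z: True
    have "gr_mult G b b z = (\<Sum>x\<in>carrier G. if \<rho> x = \<rho> \<one> then b (inv x \<otimes> z) else 0)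
                          - (\<Sum>x\<in>carrier G. if \<rho> x = \<rho> y then b (inv x \<otimes> z) else 0)"
      unfolding gr_mult_apply[OF z] sum_subtractf[symmetric]
    proof (rule sum.cong)
      fix x assume "x \<in> carrier G"
      then show "b x * b (inv x \<otimes> z)
          = (if \<rho> x = \<rho> \<one> then b (inv x \<otimes> z) else 0) - (if \<rho> x = \<rho> y then b (inv x \<otimes> z) else 0)"
        using b_elt_nontrivial[OF \<rho> p1 y] rep_one[OF \<rho>] y(2) by (simp add: b_def left_diff_distrib)
    qed simp
    also have "\<dots> = int (card (rep_kernel G \<rho>)) * b (inv \<one> \<otimes> z)
                   - int (card (rep_kernel G \<rho>)) * b (inv y \<otimes> z)"
      by (simp only: sum_rep_fibre[where g = b, OF fin \<rho> one_closed z b_const]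
                     sum_rep_fibre[where g = b, OF fin \<rho> y(1) z b_const])
    also have "\<dots> = int (p ^ (e - k)) * gr_mult G (gr_sub (gr_one G) (gr_of G y)) b z"
      using card_rep_kernel[OF \<rho> assms(1-3,5)] gr_mult_one_minus_of[OF fin y(1) z] z
      by (simp add: right_diff_distrib)
    finally show ?thesis by (simp add: gr_smult_def)
  qed (simp add: gr_mult_def gr_smult_def)
qed

theorem mainTheorem1:
  fixes G :: "('a, 'b) monoid_scheme" and p e :: nat
  assumes "Factorial_Ring.prime p" and "e \<ge> 1"
    and "comm_group G" and "finite (carrier G)" and "card (carrier G) = p ^ e"
  shows "(\<forall>\<rho> \<tau>. is_rep G \<rho> \<longrightarrow> is_rep G \<tau> \<longrightarrow> \<not> rep_equiv G \<rho> \<tau> \<longrightarrow>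
            gr_mult G (b_elt G p \<rho>) (b_elt G p \<tau>) = gr_zero)
       \<and> (\<forall>\<rho> k y. is_rep G \<rho> \<longrightarrow> has_level G p \<rho> k \<longrightarrow> k > 0 \<longrightarrow>
            y \<in> carrier G \<longrightarrow> \<rho> y = omega p \<longrightarrow>
            gr_mult G (b_elt G p \<rho>) (b_elt G p \<rho>)
              = gr_smult (int (p ^ (e - k)))
                  (gr_mult G (gr_sub (gr_one G) (gr_of G y)) (b_elt G p \<rho>)))"
proof (intro conjI allI impI)
  interpret comm_group G by fact
  fix \<rho> \<tau>
  assume \<rho>: "is_rep G \<rho>" and \<tau>: "is_rep G \<tau>" and "\<not> rep_equiv G \<rho> \<tau>"
  then obtain u where u: "u \<in> carrier G" "(\<rho> u = 1 \<and> \<tau> u \<noteq> 1) \<or> (\<tau> u = 1 \<and> \<rho> u \<noteq> 1)"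
    unfolding rep_equiv_def rep_kernel_def by auto
  then show "gr_mult G (b_elt G p \<rho>) (b_elt G p \<tau>) = gr_zero"
    using b_elt_mult_eq_zero_if_separated[OF assms(4,5,1) \<rho> \<tau> u(1)]
          b_elt_mult_eq_zero_if_separated[OF assms(4,5,1) \<tau> \<rho> u(1)]
    by (metis gr_mult_commute)
next
  interpret comm_group G by fact
  show "gr_mult G (b_elt G p \<rho>) (b_elt G p \<rho>) = gr_smult (int (p ^ (e - k)))
          (gr_mult G (gr_sub (gr_one G) (gr_of G y)) (b_elt G p \<rho>))"
    if "is_rep G \<rho>" "has_level G p \<rho> k" "y \<in> carrier G" "\<rho> y = omega p" for \<rho> k y
    using b_elt_square[OF assms(4,5,1) that] .
qed

end
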